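(* Let $l\ge 1$ and $m\ge 1$ be integers and $E$ a real number. Define $\mathcal N := \sqrt{\sum_{k=-2^{l-1}+1}^{2^{l-1}} \left|\frac{\sin \frac{(k-E)\pi}{m}}{\frac{(k-E)\pi}{m}}\right|^{2m}}$ and $\delta := \sum_{\substack{k=-2^{l-1}+1,\dots,2^{l-1}\\ |k-E|>m}} \left|\frac{1}{\mathcal N}\left(\frac{\sin \frac{(k-E)\pi}{m}}{\frac{(k-E)\pi}{m}}\right)^m\right|^2 .$ Then $\delta = O(\exp(-m))$.
   Context: Here $\delta$ is the probability, in $m$-th B-spline boosted quantum phase estimation with $l$ ancilla qubits applied to an eigenstate with eigenphase $E$ (in units of the ancilla grid), of measuring an outcome $k$ outside the confidence interval $E\pm m$; the post-QPE ancilla amplitudes are $\frac{1}{\mathcal N}\left(\frac{\sin\frac{(k-E)\pi}{m}}{\frac{(k-E)\pi}{m}}\right)^m$ for $k\in\{-2^{l-1}+1,\dots,2^{l-1}\}$. *)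

theory Defs
  imports Complex_Main
begin

text \<open>sinc with its continuous value 1 at 0 (the removable singularity at k = E).\<close>
definition sinc :: "real \<Rightarrow> real" where
  "sinc x = (if x = 0 then 1 else sin x / x)"

definition grid :: "nat \<Rightarrow> int set" where
  "grid l = {-(2^(l-1)) + 1 .. 2^(l-1)}"

definition qpe_N :: "nat \<Rightarrow> nat \<Rightarrow> real \<Rightarrow> real" where
  "qpe_N l m E = sqrt (\<Sum>k\<in>grid l. \<bar>sinc ((of_int k - E) * pi / real m)\<bar> ^ (2*m))"

definition qpe_delta :: "nat \<Rightarrow> nat \<Rightarrow> real \<Rightarrow> real" where
  "qpe_delta l m E =
     (\<Sum>k\<in>{k\<in>grid l. \<bar>of_int k - E\<bar> > real m}.
        \<bar>(1 / qpe_N l m E) * (sinc ((of_int k - E) * pi / real m)) ^ m\<bar> ^ 2)"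

end

theory Submission
  imports Defs "HOL-Analysis.Gamma_Function"
begin

(* With w_k = |sinc((k - E) pi / m)|^(2m), delta is the sum of w_k over |k - E| > m divided by
   the sum of all w_k.  The grid point nearest to E has w >= 1/9, since sinc x >= 1 - x^2/6 and
   Bernoulli's inequality give sinc(pi/(2m))^m >= 1/3.  For |k - E| > m the argument x of sinc
   exceeds pi, so w_k <= pi^(2-2m) / x^2 = m^2 pi^(-2m) / (k - E)^2, and summing 1/(k - E)^2 over
   integers at distance at least 1 from E gives at most 2 zeta(2) = pi^2/3.  Finally
   m^2 pi^(-2m) <= 4 exp(-m), because m^2 <= 4 exp m and exp 1 <= pi. *)

lemma abs_sinc_le_inverse_abs:
  fixes x :: real
  assumes "x \<noteq> 0"
  shows "\<bar>sinc x\<bar> \<le> 1 / \<bar>x\<bar>"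
  using assms by (simp add: sinc_def divide_right_mono)

lemma sinc_ge_one_minus_sq_div_6: "1 - x\<^sup>2 / 6 \<le> sinc x"
proof (cases "x = 0")
  case True
  then show ?thesis by (simp add: sinc_def)
next
  case False
  have bound: "\<bar>sin x - x\<bar> \<le> \<bar>x\<bar> ^ 3 / 6"
    using Maclaurin_sin_bound [of x 3]
    by (simp add: sin_coeff_def numeral_3_eq_3 fact_numeral)
  have "sin x / x - 1 = (sin x - x) / x"
    using False by (simp add: field_simps)
  then have "\<bar>sin x / x - 1\<bar> = \<bar>sin x - x\<bar> / \<bar>x\<bar>"
    by simp
  also have "\<dots> \<le> (\<bar>x\<bar> ^ 3 / 6) / \<bar>x\<bar>"
    using bound by (intro divide_right_mono) auto
  also have "\<dots> = x\<^sup>2 / 6"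
    using False by (simp add: power3_eq_cube power2_eq_square)
  finally have "1 - x\<^sup>2 / 6 \<le> sin x / x"
    by linarith
  then show ?thesis
    using False by (simp add: sinc_def)
qed

lemma sinc_power_ge_one_third:
  assumes m: "m \<ge> 1" and d: "\<bar>d\<bar> \<le> 1 / 2"
  shows "1 / 3 \<le> sinc (d * pi / real m) ^ m"
proof -
  define x where "x = d * pi / real m"
  define y where "y = - 2 / (3 * (real m)\<^sup>2)"
  have "\<bar>d\<bar> * pi \<le> 1 / 2 * 4"
    using d pi_less_4 by (intro mult_mono) auto
  then have "\<bar>x\<bar> \<le> 2 / real m"
    using m by (simp add: x_def abs_mult divide_right_mono)
  then have "x\<^sup>2 \<le> 4 / (real m)\<^sup>2"
    using power_mono [of "\<bar>x\<bar>" "2 / real m" 2] by (simp add: power_divide)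
  then have sinc_ge: "1 + y \<le> sinc x"
    using sinc_ge_one_minus_sq_div_6 [of x] by (simp add: y_def)
  have "1 \<le> (real m)\<^sup>2"
    using m by simp
  then have "2 / (3 * (real m)\<^sup>2) \<le> 1"
    by (simp add: divide_le_eq)
  then have y_ge: "-1 \<le> y"
    by (simp add: y_def)
  have "1 / 3 \<le> 1 + real m * y"
    using m by (simp add: y_def power2_eq_square field_simps)
  also have "\<dots> \<le> (1 + y) ^ m"
    using Bernoulli_inequality [OF y_ge] .
  also have "\<dots> \<le> sinc x ^ m"
    using sinc_ge y_ge by (intro power_mono) auto
  finally show ?thesis
    by (simp add: x_def)
qed

lemma abs_sinc_power_le:
  assumes m: "m \<ge> 1" and d: "real m < \<bar>d\<bar>"
  shows "\<bar>sinc (d * pi / real m)\<bar> ^ (2 * m) \<le> (real m)\<^sup>2 / (pi ^ (2 * m) * d\<^sup>2)"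
proof -
  define x where "x = d * pi / real m"
  have abs_x: "\<bar>x\<bar> = \<bar>d\<bar> * pi / real m"
    by (simp add: x_def abs_mult)
  have "real m * pi < \<bar>d\<bar> * pi"
    using d by simp
  then have x_gt: "pi < \<bar>x\<bar>"
    using m by (simp add: abs_x field_simps)
  then have sinc_le: "\<bar>sinc x\<bar> \<le> 1 / \<bar>x\<bar>"
    by (intro abs_sinc_le_inverse_abs) auto
  have two_m: "2 * m = (2 * m - 2) + 2"
    using m by simp
  have "\<bar>sinc x\<bar> ^ (2 * m) = \<bar>sinc x\<bar> ^ (2 * m - 2) * \<bar>sinc x\<bar>\<^sup>2"
    by (subst two_m) (rule power_add)
  also have "\<dots> \<le> (1 / pi) ^ (2 * m - 2) * (1 / \<bar>x\<bar>)\<^sup>2"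
  proof (intro mult_mono power_mono)
    have "1 / \<bar>x\<bar> \<le> 1 / pi"
      using x_gt pi_gt_zero by (intro frac_le) auto
    then show "\<bar>sinc x\<bar> \<le> 1 / pi"
      using sinc_le by linarith
  qed (use sinc_le in auto)
  also have "\<dots> = (real m)\<^sup>2 / (pi ^ (2 * m) * d\<^sup>2)"
  proof -
    have "pi ^ (2 * m) = pi ^ (2 * m - 2) * pi\<^sup>2"
      by (subst two_m) (rule power_add)
    then show ?thesis
      by (simp add: abs_x power_divide power_mult_distrib power_one_over)
  qed
  finally show ?thesis
    by (simp add: x_def)
qed

lemma sum_inverse_sq_shifted_le:
  fixes S :: "int set" and e :: real
  assumes "finite S" and ge: "\<And>k. k \<in> S \<Longrightarrow> 1 \<le> of_int k - e"
  shows "(\<Sum>k\<in>S. 1 / (of_int k - e)\<^sup>2) \<le> pi\<^sup>2 / 6"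
proof -
  define f where "f k = nat (k - \<lceil>e\<rceil> - 1)" for k
  have f_le: "real (f k) + 1 \<le> of_int k - e" and f_pos: "k - \<lceil>e\<rceil> \<ge> 1" if "k \<in> S" for k
    using ge [OF that] by (simp_all add: f_def, linarith+)
  have "inj_on f S"
  proof (rule inj_onI)
    fix a b
    assume "a \<in> S" "b \<in> S" "f a = f b"
    then show "a = b"
      using f_pos [of a] f_pos [of b] by (simp add: f_def eq_nat_nat_iff)
  qed
  have sums: "(\<lambda>n. 1 / (real n + 1)\<^sup>2) sums (pi\<^sup>2 / 6)"
    using inverse_squares_sums by (simp add: add.commute)
  have "(\<Sum>k\<in>S. 1 / (of_int k - e)\<^sup>2) \<le> (\<Sum>k\<in>S. 1 / (real (f k) + 1)\<^sup>2)"
    using f_le by (intro sum_mono frac_le power_mono) auto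
  also have "\<dots> = (\<Sum>n\<in>f ` S. 1 / (real n + 1)\<^sup>2)"
    using \<open>inj_on f S\<close> by (simp add: sum.reindex)
  also have "\<dots> \<le> (\<Sum>n. 1 / (real n + 1)\<^sup>2)"
    using sums_summable [OF sums] \<open>finite S\<close> by (intro sum_le_suminf) auto
  also have "\<dots> = pi\<^sup>2 / 6"
    using sums by (rule sums_unique [symmetric])
  finally show ?thesis .
qed

lemma sum_inverse_sq_dist_le:
  fixes S :: "int set" and e :: real
  assumes "finite S" and ge: "\<And>k. k \<in> S \<Longrightarrow> 1 \<le> \<bar>of_int k - e\<bar>"
  shows "(\<Sum>k\<in>S. 1 / (of_int k - e)\<^sup>2) \<le> pi\<^sup>2 / 3"
proof -
  define P where "P = {k\<in>S. of_int k > e}"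
  define M where "M = {k\<in>S. of_int k < e}"
  have "S = P \<union> M" "P \<inter> M = {}"
    using ge by (force simp: P_def M_def)+
  have "(\<Sum>k\<in>P. 1 / (of_int k - e)\<^sup>2) \<le> pi\<^sup>2 / 6"
    using \<open>finite S\<close> by (intro sum_inverse_sq_shifted_le) (auto simp: P_def dest!: ge split: abs_split)
  moreover have "(\<Sum>k\<in>M. 1 / (of_int k - e)\<^sup>2) \<le> pi\<^sup>2 / 6"
  proof -
    have "(\<Sum>k\<in>M. 1 / (of_int k - e)\<^sup>2) = (\<Sum>k\<in>uminus ` M. 1 / (of_int k - (- e))\<^sup>2)"
      by (subst sum.reindex) (auto simp: inj_on_def power2_commute)
    also have "\<dots> \<le> pi\<^sup>2 / 6"
      using \<open>finite S\<close> by (intro sum_inverse_sq_shifted_le) (auto simp: M_def dest!: ge split: abs_split)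
    finally show ?thesis .
  qed
  ultimately show ?thesis
    using \<open>finite S\<close> \<open>S = P \<union> M\<close> \<open>P \<inter> M = {}\<close> by (simp add: sum.union_disjoint)
qed

lemma sq_div_pi_power_le_exp: "(real m)\<^sup>2 / pi ^ (2 * m) \<le> 4 * exp (- real m)"
proof -
  have "real m / 2 \<le> exp (real m / 2)"
    using exp_ge_add_one_self [of "real m / 2"] by linarith
  then have "(real m / 2)\<^sup>2 \<le> exp (real m / 2) ^ 2"
    by (intro power_mono) auto
  then have sq_le: "(real m)\<^sup>2 \<le> 4 * exp (real m)"
    by (simp flip: exp_of_nat_mult add: power_divide)
  have "exp (real (2 * m)) = exp 1 ^ (2 * m)"
    by (simp flip: exp_of_nat_mult)
  also have "\<dots> \<le> pi ^ (2 * m)"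
    using exp_le pi_gt3 by (intro power_mono) auto
  finally have "exp (2 * real m) \<le> pi ^ (2 * m)"
    by simp
  then have "(real m)\<^sup>2 / pi ^ (2 * m) \<le> 4 * exp (real m) / exp (2 * real m)"
    using sq_le by (intro frac_le) auto
  also have "\<dots> = 4 * exp (- real m)"
    by (simp add: exp_minus exp_add [symmetric] field_simps)
  finally show ?thesis .
qed

definition qpe_weight :: "nat \<Rightarrow> real \<Rightarrow> int \<Rightarrow> real" where
  "qpe_weight m E k = \<bar>sinc ((of_int k - E) * pi / real m)\<bar> ^ (2 * m)"

lemma qpe_weight_nonneg: "0 \<le> qpe_weight m E k"
  by (simp add: qpe_weight_def)

lemma finite_grid: "finite (grid l)"
  by (simp add: grid_def)

lemma qpe_delta_eq:
  "qpe_delta l m E =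
     (\<Sum>k\<in>{k\<in>grid l. real m < \<bar>of_int k - E\<bar>}. qpe_weight m E k)
       / (\<Sum>k\<in>grid l. qpe_weight m E k)"
proof -
  have "(qpe_N l m E)\<^sup>2 = (\<Sum>k\<in>grid l. qpe_weight m E k)"
    by (simp add: qpe_N_def qpe_weight_def sum_nonneg)
  moreover have "\<bar>(1 / qpe_N l m E) * s ^ m\<bar>\<^sup>2 = \<bar>s\<bar> ^ (2 * m) / (qpe_N l m E)\<^sup>2" for s
    by (simp add: power_mult_distrib power_divide power_mult [symmetric] mult.commute power_even_abs)
  ultimately show ?thesis
    by (simp add: qpe_delta_def qpe_weight_def sum_divide_distrib)
qed

lemma qpe_weight_sum_ge:
  assumes m: "m \<ge> 1" and E: "-(2 ^ (l - 1)) + 1 \<le> E" "E \<le> 2 ^ (l - 1)"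
  shows "1 / 9 \<le> (\<Sum>k\<in>grid l. qpe_weight m E k)"
proof -
  define k0 where "k0 = \<lfloor>E + 1 / 2\<rfloor>"
  have "k0 \<in> grid l"
    using E by (simp add: grid_def k0_def le_floor_iff floor_le_iff)
  have "\<bar>of_int k0 - E\<bar> \<le> 1 / 2"
    unfolding k0_def by linarith
  then have third: "1 / 3 \<le> sinc ((of_int k0 - E) * pi / real m) ^ m"
    by (rule sinc_power_ge_one_third [OF m])
  then have "1 / 9 \<le> (sinc ((of_int k0 - E) * pi / real m) ^ m)\<^sup>2"
    using power_mono [OF third, of 2] by (simp add: power_divide)
  also have "\<dots> = qpe_weight m E k0"
    by (simp add: qpe_weight_def power_even_abs power_mult [symmetric] mult.commute)
  also have "\<dots> \<le> (\<Sum>k\<in>grid l. qpe_weight m E k)"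
    using \<open>k0 \<in> grid l\<close> by (rule member_le_sum) (simp_all add: qpe_weight_nonneg finite_grid)
  finally show ?thesis .
qed

lemma qpe_weight_tail_le:
  assumes "finite K" and m: "m \<ge> 1"
  shows "(\<Sum>k\<in>{k\<in>K. real m < \<bar>of_int k - E\<bar>}. qpe_weight m E k)
           \<le> pi\<^sup>2 / 3 * ((real m)\<^sup>2 / pi ^ (2 * m))"
proof -
  let ?T = "{k\<in>K. real m < \<bar>of_int k - E\<bar>}"
  have "(\<Sum>k\<in>?T. qpe_weight m E k)
        \<le> (\<Sum>k\<in>?T. (real m)\<^sup>2 / pi ^ (2 * m) * (1 / (of_int k - E)\<^sup>2))"
    using abs_sinc_power_le [OF m] by (intro sum_mono) (simp add: qpe_weight_def)
  also have "\<dots> = (real m)\<^sup>2 / pi ^ (2 * m) * (\<Sum>k\<in>?T. 1 / (of_int k - E)\<^sup>2)"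
    by (simp add: sum_distrib_left)
  also have "\<dots> \<le> (real m)\<^sup>2 / pi ^ (2 * m) * (pi\<^sup>2 / 3)"
    using \<open>finite K\<close> m by (intro mult_left_mono sum_inverse_sq_dist_le) auto
  finally show ?thesis
    by (simp only: mult.commute)
qed

theorem lemma2:
  shows "\<exists>C. \<forall>l m E. l \<ge> 1 \<longrightarrow> m \<ge> 1 \<longrightarrow>
            -(2^(l-1)) + 1 \<le> E \<longrightarrow> E \<le> 2^(l-1) \<longrightarrow>
            qpe_delta l m E \<le> C * exp (- real m)"
proof (intro exI allI impI)
  fix l m :: nat and E :: real
  assume "l \<ge> 1" "m \<ge> 1" "-(2^(l-1)) + 1 \<le> E" "E \<le> 2^(l-1)"
  let ?tail = "\<Sum>k\<in>{k\<in>grid l. real m < \<bar>of_int k - E\<bar>}. qpe_weight m E k"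
  have "1 / 9 \<le> (\<Sum>k\<in>grid l. qpe_weight m E k)"
    by (rule qpe_weight_sum_ge) fact+
  moreover have "0 \<le> ?tail"
    by (intro sum_nonneg qpe_weight_nonneg)
  ultimately have "qpe_delta l m E \<le> ?tail / (1 / 9)"
    unfolding qpe_delta_eq by (intro divide_left_mono) auto
  also have "\<dots> = 9 * ?tail"
    by simp
  also have "\<dots> \<le> 9 * (pi\<^sup>2 / 3 * ((real m)\<^sup>2 / pi ^ (2 * m)))"
    using \<open>m \<ge> 1\<close> by (intro mult_left_mono qpe_weight_tail_le finite_grid) auto
  also have "\<dots> \<le> 9 * (pi\<^sup>2 / 3 * (4 * exp (- real m)))"
    using sq_div_pi_power_le_exp by (intro mult_left_mono) auto
  finally show "qpe_delta l m E \<le> 12 * pi\<^sup>2 * exp (- real m)"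
    by (simp add: mult_ac)
qed

end
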